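(* Let $G=\mathrm{SL}_2(q)$ with $q$ even, and let $\mathcal{C}$ be the conjugacy class of an involution. Then $\mathcal{K}(G,\mathcal{C})$ equals the commuting graph on $\mathcal{C}$, and $K_{\mathcal{C}}$ is reducible and non-degenerate.
   Context: For a finite group $G$ and a subset $\mathcal{C}\subseteq G\setminus\{1\}$ closed under conjugation, the Killing form $K_{\mathcal{C}}$ is the bilinear form on the complex vector space with basis $\mathcal{C}$ given on basis elements by $K_{\mathcal{C}}(a,b)=|C_G(ab)\cap\mathcal{C}|$; it is non-degenerate if the matrix $(K_{\mathcal{C}}(a,b))_{a,b\in\mathcal{C}}$ is invertible. $\mathcal{K}(G,\mathcal{C})$ is the graph with vertex set $\mathcal{C}$ in which distinct $a,b$ are adjacent iff $C_G(ab)\cap\mathcal{C}\neq\emptyset$. $K_{\mathcal{C}}$ is irreducible if $\mathcal{K}(G,\mathcal{C})$ is connected and reducible otherwise. The commuting graph on $\mathcal{C}$ has vertex set $\mathcal{C}$, with distinct $a,b$ adjacent iff $ab=ba$. *)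

theory Defs
  imports "HOL-Analysis.Analysis" "HOL-Algebra.Group"
begin

definition SL2 :: "('a::field ^ 2 ^ 2) monoid" where
  "SL2 = \<lparr>carrier = {A. det A = 1}, monoid.mult = (**), one = mat 1\<rparr>"

definition centralizer_in :: "('g, 'b) monoid_scheme \<Rightarrow> 'g \<Rightarrow> 'g set" where
  "centralizer_in G x = {g \<in> carrier G. g \<otimes>\<^bsub>G\<^esub> x = x \<otimes>\<^bsub>G\<^esub> g}"

definition conj_class :: "('g, 'b) monoid_scheme \<Rightarrow> 'g \<Rightarrow> 'g set" where
  "conj_class G x = {g \<otimes>\<^bsub>G\<^esub> x \<otimes>\<^bsub>G\<^esub> inv\<^bsub>G\<^esub> g | g. g \<in> carrier G}"

definition killing_form :: "('g, 'b) monoid_scheme \<Rightarrow> 'g set \<Rightarrow> 'g \<Rightarrow> 'g \<Rightarrow> nat" where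
  "killing_form G C a b = card (centralizer_in G (a \<otimes>\<^bsub>G\<^esub> b) \<inter> C)"

definition killing_nondegenerate :: "('g, 'b) monoid_scheme \<Rightarrow> 'g set \<Rightarrow> bool" where
  "killing_nondegenerate G C \<longleftrightarrow>
     (\<exists>N :: 'g \<Rightarrow> 'g \<Rightarrow> complex. \<forall>a\<in>C. \<forall>c\<in>C.
        (\<Sum>b\<in>C. of_nat (killing_form G C a b) * N b c) = (if a = c then 1 else 0) \<and>
        (\<Sum>b\<in>C. N a b * of_nat (killing_form G C b c)) = (if a = c then 1 else 0))"

definition killing_adj :: "('g, 'b) monoid_scheme \<Rightarrow> 'g set \<Rightarrow> 'g \<Rightarrow> 'g \<Rightarrow> bool" where
  "killing_adj G C a b \<longleftrightarrow> a \<noteq> b \<and> centralizer_in G (a \<otimes>\<^bsub>G\<^esub> b) \<inter> C \<noteq> {}"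

definition commuting_adj :: "('g, 'b) monoid_scheme \<Rightarrow> 'g \<Rightarrow> 'g \<Rightarrow> bool" where
  "commuting_adj G a b \<longleftrightarrow> a \<noteq> b \<and> a \<otimes>\<^bsub>G\<^esub> b = b \<otimes>\<^bsub>G\<^esub> a"

definition graph_connected :: "'g set \<Rightarrow> ('g \<Rightarrow> 'g \<Rightarrow> bool) \<Rightarrow> bool" where
  "graph_connected V E \<longleftrightarrow>
     (\<forall>a\<in>V. \<forall>b\<in>V. (\<lambda>x y. x \<in> V \<and> y \<in> V \<and> E x y)\<^sup>*\<^sup>* a b)"

definition killing_irreducible :: "('g, 'b) monoid_scheme \<Rightarrow> 'g set \<Rightarrow> bool" where
  "killing_irreducible G C \<longleftrightarrow> graph_connected C (killing_adj G C)"

end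

theory Submission
  imports Defs
begin

text \<open>In characteristic 2 an involution of SL_2 has the form z = 1 + n with n a non-zero
  nilpotent matrix, and its centralizer is {1 + s n}, an elementary abelian 2-group.
  Hence commuting is an equivalence relation on a conjugacy class C of involutions, an element
  of C centralizes a b only if a and b commute, and for commuting a \<noteq> b the elements of C
  centralizing a b are exactly those commuting with a. So K(G,C) is the commuting graph, and the
  Killing matrix is block diagonal along the commuting classes, with block (|C| - m) I + m J on
  a class of size m (J the all-ones matrix); it is invertible as soon as no class is all of C.
  Finally, conjugating by a transvection moves any involution to one it does not commute with.\<close>

definition involutions :: "('g, 'b) monoid_scheme \<Rightarrow> 'g set" where
  "involutions G = {z \<in> carrier G. z \<noteq> \<one>\<^bsub>G\<^esub> \<and> z \<otimes>\<^bsub>G\<^esub> z = \<one>\<^bsub>G\<^esub>}"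

lemma (in monoid) commute_if_product_square_one:
  assumes "a \<in> carrier G" "b \<in> carrier G"
    and "a \<otimes> a = \<one>" "b \<otimes> b = \<one>" "(a \<otimes> b) \<otimes> (a \<otimes> b) = \<one>"
  shows "a \<otimes> b = b \<otimes> a"
proof -
  have "b \<otimes> a = (a \<otimes> a) \<otimes> (b \<otimes> a) \<otimes> (b \<otimes> b)"
    using assms(1-4) by simp
  also have "\<dots> = a \<otimes> ((a \<otimes> b) \<otimes> (a \<otimes> b)) \<otimes> b"
    using assms(1,2) by (simp add: m_assoc)
  also have "\<dots> = a \<otimes> b"
    using assms by simp
  finally show ?thesis by (rule sym)
qed

lemma (in monoid) commute_mult_right:
  assumes "x \<in> carrier G" "a \<in> carrier G" "b \<in> carrier G"
    and "x \<otimes> a = a \<otimes> x" "x \<otimes> b = b \<otimes> x"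
  shows "x \<otimes> (a \<otimes> b) = (a \<otimes> b) \<otimes> x"
proof -
  have "x \<otimes> (a \<otimes> b) = (a \<otimes> x) \<otimes> b"
    using assms by (simp flip: m_assoc)
  also have "\<dots> = a \<otimes> (b \<otimes> x)"
    using assms by (simp add: m_assoc)
  also have "\<dots> = (a \<otimes> b) \<otimes> x"
    using assms by (simp flip: m_assoc)
  finally show ?thesis .
qed

lemma (in group) mem_conj_class_self: "x \<in> carrier G \<Longrightarrow> x \<in> conj_class G x"
  unfolding conj_class_def
  by (metis (mono_tags, lifting) inv_one l_one one_closed r_one mem_Collect_eq)

lemma (in group) conj_class_subset_involutions:
  assumes "x \<in> involutions G"
  shows "conj_class G x \<subseteq> involutions G"
proof
  fix t assume "t \<in> conj_class G x"
  then obtain g where g: "g \<in> carrier G" and t: "t = g \<otimes> x \<otimes> inv g"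
    unfolding conj_class_def by blast
  have x: "x \<in> carrier G" "x \<noteq> \<one>" "x \<otimes> x = \<one>"
    using assms by (auto simp: involutions_def)
  have "t \<otimes> t = g \<otimes> x \<otimes> (inv g \<otimes> g) \<otimes> x \<otimes> inv g"
    using g x(1) by (simp add: t m_assoc del: l_inv Units_l_inv)
  also have "\<dots> = g \<otimes> (x \<otimes> x) \<otimes> inv g"
    using g x(1) by (simp add: m_assoc)
  also have "\<dots> = \<one>"
    using g x(3) by simp
  finally have "t \<otimes> t = \<one>" .
  moreover have "t \<noteq> \<one>"
  proof
    assume "t = \<one>"
    then have "g \<otimes> x = g"
      using g x(1) t inv_solve_right'[of \<one> "g \<otimes> x" g] by simp
    then show False
      using g x(1,2) by simp
  qed
  ultimately show "t \<in> involutions G"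
    using g x(1) by (simp add: t involutions_def)
qed

lemma (in group) conj_by_involution_mem_conj_class:
  assumes "g \<in> carrier G" "g \<otimes> g = \<one>" "x \<in> carrier G"
  shows "g \<otimes> x \<otimes> g \<in> conj_class G x"
proof -
  have "inv g = g"
    using assms by (simp add: inv_equality)
  then show ?thesis
    using assms(1) unfolding conj_class_def by force
qed

lemma left_inverse_if_symmetric_right_inverse:
  fixes K N :: "'i \<Rightarrow> 'i \<Rightarrow> 'k::comm_semiring_1"
  assumes K_sym: "\<And>a b. a \<in> I \<Longrightarrow> b \<in> I \<Longrightarrow> K a b = K b a"
    and N_sym: "\<And>a b. a \<in> I \<Longrightarrow> b \<in> I \<Longrightarrow> N a b = N b a"
    and right: "\<And>a c. a \<in> I \<Longrightarrow> c \<in> I \<Longrightarrow> (\<Sum>b\<in>I. K a b * N b c) = (if a = c then 1 else 0)"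
    and "a \<in> I" "c \<in> I"
  shows "(\<Sum>b\<in>I. N a b * K b c) = (if a = c then 1 else 0)"
proof -
  have "(\<Sum>b\<in>I. N a b * K b c) = (\<Sum>b\<in>I. K c b * N b a)"
    using assms by (intro sum.cong) (simp_all add: mult.commute)
  also have "\<dots> = (if a = c then 1 else 0)"
    using right[of c a] assms by simp
  finally show ?thesis .
qed

context
  fixes I :: "'i set" and R :: "'i \<Rightarrow> 'i \<Rightarrow> bool" and K :: "'i \<Rightarrow> 'i \<Rightarrow> nat"
  assumes fin: "finite I"
    and refl: "\<And>a. a \<in> I \<Longrightarrow> R a a"
    and sym: "\<And>a b. a \<in> I \<Longrightarrow> b \<in> I \<Longrightarrow> R a b \<Longrightarrow> R b a"
    and trans: "\<And>a b c. a \<in> I \<Longrightarrow> b \<in> I \<Longrightarrow> c \<in> I \<Longrightarrow> R a b \<Longrightarrow> R b c \<Longrightarrow> R a c"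
    and proper: "\<And>a. a \<in> I \<Longrightarrow> card {c \<in> I. R a c} < card I"
    and K: "\<And>a b. a \<in> I \<Longrightarrow> b \<in> I \<Longrightarrow>
              K a b = (if a = b then card I else if R a b then card {c \<in> I. R a c} else 0)"
begin

lemma class_block_matrix_symmetric:
  assumes "a \<in> I" "b \<in> I"
  shows "K a b = K b a"
proof (cases "R a b")
  case True
  then have "{c \<in> I. R a c} = {c \<in> I. R b c}"
    using assms sym trans by blast
  then show ?thesis
    using True K[OF assms] K[OF assms(2,1)] sym[OF assms True] by simp
next
  case False
  then show ?thesis
    using K[OF assms] K[OF assms(2,1)] sym[OF assms(2,1)] by auto
qed

text \<open>With E the indicator matrix of R and m the size of the block, one has
  K = \<alpha> I + m E and E^2 = m E, so the inverse of K is I / \<alpha> - t E with t = m / (\<alpha> (\<alpha> + m^2)).\<close>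

lemma class_block_matrix_right_inverse_within_class:
  fixes m \<alpha> :: "'i \<Rightarrow> nat" and t :: "'i \<Rightarrow> 'k::field_char_0"
  defines "m \<equiv> \<lambda>a. card {c \<in> I. R a c}"
    and "\<alpha> \<equiv> \<lambda>a. card I - m a"
    and "t \<equiv> \<lambda>a. of_nat (m a) / (of_nat (\<alpha> a) * of_nat (\<alpha> a + m a * m a))"
    and "N \<equiv> \<lambda>b c. (if b = c then 1 / of_nat (\<alpha> c) else 0) - (if R b c then t c else 0)"
  assumes a: "a \<in> I" and c: "c \<in> I" and ac: "R a c"
  shows "(\<Sum>b\<in>I. of_nat (K a b) * N b c) = (if a = c then 1 else 0)"
proof -
  have class_ac: "{x \<in> I. R a x} = {x \<in> I. R c x}"
    using a c ac sym trans by blast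
  have \<alpha>a: "(of_nat (\<alpha> a) :: 'k) \<noteq> 0"
    using proper[OF a] by (simp add: \<alpha>_def m_def)
  have "of_nat (K a b) * N b c =
      (if b = a then (if a = c then 1 else 0) else 0)
      - (if b = a then of_nat (\<alpha> a) * t a else 0)
      + (if b = c then of_nat (m a) / of_nat (\<alpha> a) else 0)
      - (if R a b then of_nat (m a) * t a else 0)"
    if b: "b \<in> I" for b
  proof -
    have "R b c \<longleftrightarrow> R a b"
      using ac sym trans a b c by blast
    then have "N b c = (if b = c then 1 / of_nat (\<alpha> a) else 0) - (if R a b then t a else 0)"
      using class_ac by (simp add: N_def t_def \<alpha>_def m_def)
    moreover have "(of_nat (K a b) :: 'k) =
        (if a = b then of_nat (\<alpha> a) else 0) + (if R a b then of_nat (m a) else 0)"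
      using K[OF a b] refl[OF a] proper[OF a] by (auto simp: \<alpha>_def m_def)
    ultimately have "of_nat (K a b) * N b c =
        ((if a = b then of_nat (\<alpha> a) else 0) + (if R a b then of_nat (m a) else 0))
        * ((if b = c then 1 / of_nat (\<alpha> a) else 0) - (if R a b then t a else 0))"
      by (simp only:)
    then show ?thesis
      using \<alpha>a ac refl[OF a]
      by (cases "b = a"; cases "b = c"; cases "R a b") (simp_all add: algebra_simps)
  qed
  then have "(\<Sum>b\<in>I. of_nat (K a b) * N b c) = (if a = c then 1 else 0) - of_nat (\<alpha> a) * t a
      + of_nat (m a) / of_nat (\<alpha> a) - of_nat (m a) * t a * of_nat (m a)"
    using fin a c by (simp add: sum.distrib sum_subtractf sum.inter_filter[symmetric] m_def)
  also have "\<dots> = (if a = c then 1 else 0)"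
  proof -
    have "(of_nat (\<alpha> a + m a * m a) :: 'k) \<noteq> 0"
      using \<alpha>a by (simp only: of_nat_eq_0_iff)
    then have "of_nat (\<alpha> a + m a * m a) * t a = of_nat (m a) / of_nat (\<alpha> a)"
      using \<alpha>a by (simp add: t_def)
    then show ?thesis
      by (simp add: algebra_simps)
  qed
  finally show ?thesis .
qed

lemma class_block_matrix_invertible:
  "\<exists>N :: 'i \<Rightarrow> 'i \<Rightarrow> 'k::field_char_0. \<forall>a\<in>I. \<forall>c\<in>I.
     (\<Sum>b\<in>I. of_nat (K a b) * N b c) = (if a = c then 1 else 0) \<and>
     (\<Sum>b\<in>I. N a b * of_nat (K b c)) = (if a = c then 1 else 0)"
proof -
  define m where "m a = card {c \<in> I. R a c}" for a
  define \<alpha> where "\<alpha> a = card I - m a" for a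
  define t :: "'i \<Rightarrow> 'k" where "t a = of_nat (m a) / (of_nat (\<alpha> a) * of_nat (\<alpha> a + m a * m a))" for a
  define N where
    "N b c = (if b = c then 1 / of_nat (\<alpha> c) else 0) - (if R b c then t c else 0)" for b c
  have t_class_const: "t a = t b" if "a \<in> I" "b \<in> I" "R a b" for a b
  proof -
    have "{c \<in> I. R a c} = {c \<in> I. R b c}"
      using that sym trans by blast
    then show ?thesis
      by (simp add: m_def \<alpha>_def t_def)
  qed
  have right: "(\<Sum>b\<in>I. of_nat (K a b) * N b c) = (if a = c then 1 else 0)"
    if a: "a \<in> I" and c: "c \<in> I" for a c
  proof (cases "R a c")
    case True
    then show ?thesis
      unfolding N_def t_def \<alpha>_def m_def
      by (rule class_block_matrix_right_inverse_within_class[OF a c])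
  next
    case False
    have "of_nat (K a b) * N b c = 0" if b: "b \<in> I" for b
      using False trans[OF a b c] refl[OF a] by (auto simp: K[OF a b] N_def)
    moreover have "a \<noteq> c"
      using False refl[OF a] by blast
    ultimately show ?thesis
      by (simp add: sum.neutral)
  qed
  have K_sym: "of_nat (K a b) = (of_nat (K b a) :: 'k)" if "a \<in> I" "b \<in> I" for a b
    using class_block_matrix_symmetric[OF that] by simp
  have N_sym: "N a b = N b a" if "a \<in> I" "b \<in> I" for a b
  proof (cases "R a b")
    case True
    then show ?thesis
      using sym[OF that True] t_class_const[OF that True] by (simp add: N_def)
  next
    case False
    then show ?thesis
      using sym[OF that(2,1)] refl[OF that(1)] by (auto simp: N_def)
  qed
  show ?thesis
    using right left_inverse_if_symmetric_right_inverse[OF K_sym N_sym right] by blast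
qed

end

locale involution_centralizers_elementary_abelian = group +
  assumes centralizer_involution_commute:
      "z \<in> involutions G \<Longrightarrow> g \<in> centralizer_in G z \<Longrightarrow> h \<in> centralizer_in G z \<Longrightarrow> g \<otimes> h = h \<otimes> g"
    and centralizer_involution_square:
      "z \<in> involutions G \<Longrightarrow> g \<in> centralizer_in G z \<Longrightarrow> g \<otimes> g = \<one>"

context involution_centralizers_elementary_abelian
begin

context
  fixes C
  assumes C_involutions: "C \<subseteq> involutions G"
begin

lemma C_carrier: "c \<in> C \<Longrightarrow> c \<in> carrier G"
  using C_involutions by (auto simp: involutions_def)

lemma C_square: "c \<in> C \<Longrightarrow> c \<otimes> c = \<one>"
  using C_involutions by (auto simp: involutions_def)

lemma commute_trans_on_C:
  assumes "a \<in> C" "b \<in> C" "c \<in> C" "a \<otimes> b = b \<otimes> a" "b \<otimes> c = c \<otimes> b"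
  shows "a \<otimes> c = c \<otimes> a"
  using centralizer_involution_commute[of b a c] assms C_involutions C_carrier
  by (auto simp: centralizer_in_def)

lemma commute_if_centralizer_product_meets_C:
  assumes "a \<in> C" "b \<in> C" "c \<in> centralizer_in G (a \<otimes> b) \<inter> C"
  shows "a \<otimes> b = b \<otimes> a"
proof (rule commute_if_product_square_one)
  have "a \<otimes> b \<in> centralizer_in G c"
    using assms C_carrier by (auto simp: centralizer_in_def)
  then show "(a \<otimes> b) \<otimes> (a \<otimes> b) = \<one>"
    using centralizer_involution_square assms(3) C_involutions by blast
qed (use assms C_carrier C_square in auto)

lemma killing_adj_iff_commuting_adj:
  assumes "a \<in> C" "b \<in> C"
  shows "killing_adj G C a b \<longleftrightarrow> commuting_adj G a b"
proof
  assume "killing_adj G C a b"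
  then show "commuting_adj G a b"
    using commute_if_centralizer_product_meets_C[OF assms]
    by (auto simp: killing_adj_def commuting_adj_def)
next
  assume ab: "commuting_adj G a b"
  then have "a \<otimes> (a \<otimes> b) = (a \<otimes> b) \<otimes> a"
    using assms C_carrier commute_mult_right[of a a b] by (auto simp: commuting_adj_def)
  then have "a \<in> centralizer_in G (a \<otimes> b) \<inter> C"
    using assms C_carrier by (simp add: centralizer_in_def)
  then show "killing_adj G C a b"
    using ab by (auto simp: killing_adj_def commuting_adj_def)
qed

lemma centralizer_commuting_product_inter_C:
  assumes a: "a \<in> C" and b: "b \<in> C" and "a \<noteq> b" and ab: "a \<otimes> b = b \<otimes> a"
  shows "centralizer_in G (a \<otimes> b) \<inter> C = {c \<in> C. a \<otimes> c = c \<otimes> a}"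
proof -
  have "a \<otimes> b \<noteq> \<one>"
    using \<open>a \<noteq> b\<close> a b C_carrier C_square by (metis inv_equality)
  moreover have "(a \<otimes> b) \<otimes> (a \<otimes> b) = \<one>"
    using a b C_carrier C_square by (metis ab m_assoc m_closed r_one)
  ultimately have ab_inv: "a \<otimes> b \<in> involutions G"
    using a b C_carrier by (simp add: involutions_def)
  have a_cent: "a \<in> centralizer_in G (a \<otimes> b)"
    using a b ab C_carrier commute_mult_right[of a a b] by (simp add: centralizer_in_def)
  show ?thesis
  proof (intro equalityI subsetI)
    fix c assume "c \<in> centralizer_in G (a \<otimes> b) \<inter> C"
    then show "c \<in> {c \<in> C. a \<otimes> c = c \<otimes> a}"
      using centralizer_involution_commute[OF ab_inv a_cent] by auto
  next
    fix c assume c: "c \<in> {c \<in> C. a \<otimes> c = c \<otimes> a}"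
    then have "b \<otimes> c = c \<otimes> b"
      using commute_trans_on_C[of b a c] a b ab by auto
    then have "c \<otimes> (a \<otimes> b) = (a \<otimes> b) \<otimes> c"
      using c a b C_carrier commute_mult_right[of c a b] by auto
    then show "c \<in> centralizer_in G (a \<otimes> b) \<inter> C"
      using c a b C_carrier by (simp add: centralizer_in_def)
  qed
qed

lemma killing_form_eq:
  assumes a: "a \<in> C" and b: "b \<in> C"
  shows "killing_form G C a b =
           (if a = b then card C else if a \<otimes> b = b \<otimes> a then card {c \<in> C. a \<otimes> c = c \<otimes> a} else 0)"
proof -
  consider "a = b" | "a \<noteq> b" "a \<otimes> b = b \<otimes> a" | "a \<otimes> b \<noteq> b \<otimes> a"
    by blast
  then show ?thesis
  proof cases
    case 1
    then have "centralizer_in G (a \<otimes> b) \<inter> C = C"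
      using a C_carrier C_square by (auto simp: centralizer_in_def)
    then show ?thesis
      using 1 by (simp add: killing_form_def)
  next
    case 2
    then show ?thesis
      using centralizer_commuting_product_inter_C[OF a b] by (simp add: killing_form_def)
  next
    case 3
    then have "centralizer_in G (a \<otimes> b) \<inter> C = {}"
      using commute_if_centralizer_product_meets_C[OF a b] by blast
    then show ?thesis
      using 3 by (auto simp: killing_form_def)
  qed
qed

lemma not_killing_irreducible_if_noncommuting:
  assumes x: "x \<in> C" and w: "w \<in> C" and xw: "x \<otimes> w \<noteq> w \<otimes> x"
  shows "\<not> killing_irreducible G C"
proof
  let ?E = "\<lambda>u v. u \<in> C \<and> v \<in> C \<and> killing_adj G C u v"
  have "u \<in> C \<and> x \<otimes> u = u \<otimes> x" if "?E\<^sup>*\<^sup>* x u" for u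
    using that
  proof (induction rule: rtranclp_induct)
    case base
    then show ?case
      using x by simp
  next
    case (step u v)
    then have "u \<otimes> v = v \<otimes> u"
      using killing_adj_iff_commuting_adj by (auto simp: commuting_adj_def)
    then show ?case
      using step commute_trans_on_C[of x u v] x by blast
  qed
  moreover assume "killing_irreducible G C"
  then have "?E\<^sup>*\<^sup>* x w"
    using x w by (auto simp: killing_irreducible_def graph_connected_def)
  ultimately show False
    using xw by blast
qed

lemma killing_nondegenerate_if_noncommuting:
  assumes "finite C" and x: "x \<in> C" and w: "w \<in> C" and xw: "x \<otimes> w \<noteq> w \<otimes> x"
  shows "killing_nondegenerate G C"
  unfolding killing_nondegenerate_def
proof (rule class_block_matrix_invertible[where R = "\<lambda>a c. a \<otimes> c = c \<otimes> a"])
  show "card {c \<in> C. a \<otimes> c = c \<otimes> a} < card C" if a: "a \<in> C" for a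
  proof (rule psubset_card_mono)
    have "\<not> (a \<otimes> x = x \<otimes> a \<and> a \<otimes> w = w \<otimes> a)"
      using commute_trans_on_C[OF x a w] a x w xw by metis
    then show "{c \<in> C. a \<otimes> c = c \<otimes> a} \<subset> C"
      using x w by blast
  qed fact
  show "a \<otimes> c = c \<otimes> a" if "a \<in> C" "b \<in> C" "c \<in> C" "a \<otimes> b = b \<otimes> a" "b \<otimes> c = c \<otimes> b" for a b c
    using commute_trans_on_C that by blast
  show "b \<otimes> a = a \<otimes> b" if "a \<otimes> b = b \<otimes> a" for a b
    using that by simp
qed (simp_all add: assms killing_form_eq)

end

end

lemma carrier_SL2 [simp]: "carrier SL2 = {A. det A = 1}"
  and mult_SL2 [simp]: "A \<otimes>\<^bsub>SL2\<^esub> B = A ** B"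
  and one_SL2 [simp]: "\<one>\<^bsub>SL2\<^esub> = mat 1"
  by (simp_all add: SL2_def)

lemma involutions_SL2:
  "z \<in> involutions SL2 \<longleftrightarrow> det z = 1 \<and> z ** z = mat 1 \<and> z \<noteq> mat 1"
  by (auto simp: involutions_def)

lemma group_SL2: "group (SL2 :: ('a::field ^ 2 ^ 2) monoid)"
proof (rule groupI)
  fix A :: "'a ^ 2 ^ 2"
  assume "A \<in> carrier SL2"
  then have det_A: "det A = 1"
    by simp
  then have "invertible A"
    by (simp add: invertible_det_nz)
  then obtain B where B: "A ** B = mat 1" "B ** A = mat 1"
    unfolding invertible_def by blast
  then have "det B * det A = 1"
    by (metis det_I det_mul)
  then show "\<exists>B\<in>carrier SL2. B \<otimes>\<^bsub>SL2\<^esub> A = \<one>\<^bsub>SL2\<^esub>"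
    using B det_A by auto
qed (auto simp: det_mul matrix_mul_assoc)

lemma matrix_mult_2_nth:
  "((A :: 'a::comm_ring_1 ^ 2 ^ 2) ** B) $ i $ j = A $ i $ 1 * B $ 1 $ j + A $ i $ 2 * B $ 2 $ j"
  by (simp add: matrix_matrix_mult_def sum_2)

lemma mat_1_2_nth: "(mat 1 :: 'a::comm_ring_1 ^ 2 ^ 2) $ i $ j = (if i = j then 1 else 0)"
  by (simp add: mat_def)

lemma matrix_2_eq_iff:
  "(A :: 'a ^ 2 ^ 2) = B \<longleftrightarrow>
     A $ 1 $ 1 = B $ 1 $ 1 \<and> A $ 1 $ 2 = B $ 1 $ 2 \<and> A $ 2 $ 1 = B $ 2 $ 1 \<and> A $ 2 $ 2 = B $ 2 $ 2"
  by (auto simp: vec_eq_iff forall_2)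

lemma add_self_CHAR_2: "CHAR('a::ring_1) = 2 \<Longrightarrow> (u :: 'a) + u = 0"
  by (metis uminus_CHAR_2 add.right_inverse)

lemma square_eq_1_CHAR_2:
  assumes "CHAR('a::field) = 2" "(a :: 'a) * a = 1"
  shows "a = 1"
proof -
  have "(a + 1) * (a + 1) = (a * a + 1) + (a + a)"
    by (simp add: algebra_simps)
  also have "\<dots> = 0"
    using assms(2) add_self_CHAR_2[OF assms(1), of a] add_self_CHAR_2[OF assms(1), of 1]
    by (simp only: add_0_right)
  finally have "a = - 1"
    by (simp add: eq_neg_iff_add_eq_0)
  then show ?thesis
    using uminus_CHAR_2[OF assms(1), of 1] by simp
qed

lemma SL2_involution_entries:
  fixes z :: "'a::field ^ 2 ^ 2"
  assumes ch: "CHAR('a) = 2" and z: "z \<in> involutions SL2"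
  shows "z $ 2 $ 2 = z $ 1 $ 1 \<and> (z $ 1 $ 2 \<noteq> 0 \<or> z $ 2 $ 1 \<noteq> 0)"
proof -
  have sq: "z $ 1 $ 1 * z $ 1 $ 1 + z $ 1 $ 2 * z $ 2 $ 1 = 1"
    "z $ 1 $ 1 * z $ 1 $ 2 + z $ 1 $ 2 * z $ 2 $ 2 = 0"
    "z $ 2 $ 1 * z $ 1 $ 1 + z $ 2 $ 2 * z $ 2 $ 1 = 0"
    "z $ 2 $ 1 * z $ 1 $ 2 + z $ 2 $ 2 * z $ 2 $ 2 = 1"
    using z unfolding involutions_SL2 matrix_2_eq_iff
    by (simp_all add: matrix_mult_2_nth mat_1_2_nth)
  show ?thesis
  proof (cases "z $ 1 $ 2 = 0 \<and> z $ 2 $ 1 = 0")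
    case True
    then have "z $ 1 $ 1 * z $ 1 $ 1 = 1" "z $ 2 $ 2 * z $ 2 $ 2 = 1"
      using sq by simp_all
    then have "z $ 1 $ 1 = 1" "z $ 2 $ 2 = 1"
      using square_eq_1_CHAR_2[OF ch] by blast+
    then have "z = mat 1"
      using True unfolding matrix_2_eq_iff by (simp add: mat_1_2_nth)
    then show ?thesis
      using z by (simp add: involutions_SL2)
  next
    case False
    have "z $ 1 $ 2 * (z $ 1 $ 1 + z $ 2 $ 2) = 0" "z $ 2 $ 1 * (z $ 1 $ 1 + z $ 2 $ 2) = 0"
      using sq by (simp_all add: algebra_simps)
    then have "z $ 1 $ 1 + z $ 2 $ 2 = 0"
      using False by auto
    then have "z $ 2 $ 2 = - z $ 1 $ 1"
      by (simp add: eq_neg_iff_add_eq_0 add.commute)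
    then show ?thesis
      using False uminus_CHAR_2[OF ch] by simp
  qed
qed

lemma commute_SL2_involution_entries:
  fixes z M :: "'a::field ^ 2 ^ 2"
  assumes ch: "CHAR('a) = 2" and z: "z \<in> involutions SL2" and comm: "M ** z = z ** M"
  shows "M $ 2 $ 2 = M $ 1 $ 1 \<and> z $ 1 $ 2 * M $ 2 $ 1 = z $ 2 $ 1 * M $ 1 $ 2"
proof -
  obtain a b c where zz: "z $ 1 $ 1 = a" "z $ 2 $ 2 = a" "z $ 1 $ 2 = b" "z $ 2 $ 1 = c"
    and bc: "b \<noteq> 0 \<or> c \<noteq> 0"
    using SL2_involution_entries[OF ch z] by metis
  have e: "M $ 1 $ 1 * b + M $ 1 $ 2 * a = a * M $ 1 $ 2 + b * M $ 2 $ 2"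
    "M $ 2 $ 1 * a + M $ 2 $ 2 * c = c * M $ 1 $ 1 + a * M $ 2 $ 1"
    "M $ 1 $ 1 * a + M $ 1 $ 2 * c = a * M $ 1 $ 1 + b * M $ 2 $ 1"
    using comm unfolding matrix_2_eq_iff by (simp_all add: matrix_mult_2_nth zz)
  have "b * (M $ 1 $ 1 - M $ 2 $ 2) = 0" "c * (M $ 1 $ 1 - M $ 2 $ 2) = 0"
    using e(1,2) by (auto simp: algebra_simps)
  then have "M $ 1 $ 1 = M $ 2 $ 2"
    using bc by auto
  moreover have "b * M $ 2 $ 1 = c * M $ 1 $ 2"
    using e(3) by (simp add: algebra_simps)
  ultimately show ?thesis
    using zz by simp
qed

lemma SL2_centralizer_involution_square:
  fixes z M :: "'a::field ^ 2 ^ 2"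
  assumes ch: "CHAR('a) = 2" and z: "z \<in> involutions SL2"
    and comm: "M ** z = z ** M" and det_M: "det M = 1"
  shows "M ** M = mat 1"
proof -
  have diag: "M $ 2 $ 2 = M $ 1 $ 1"
    using commute_SL2_involution_entries[OF ch z comm] by simp
  then have "M $ 1 $ 1 * M $ 1 $ 1 + M $ 1 $ 2 * M $ 2 $ 1 = 1"
    using det_M by (simp add: det_2 minus_CHAR_2[OF ch])
  moreover have "M $ 1 $ 1 * M $ 1 $ 2 + M $ 1 $ 2 * M $ 1 $ 1 = 0"
    "M $ 2 $ 1 * M $ 1 $ 1 + M $ 1 $ 1 * M $ 2 $ 1 = 0"
    by (metis add_self_CHAR_2[OF ch] mult.commute)+
  ultimately show ?thesis
    using diag unfolding matrix_2_eq_iff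
    by (simp add: matrix_mult_2_nth mat_1_2_nth mult.commute add.commute)
qed

lemma SL2_centralizer_involution_commute:
  fixes z M M' :: "'a::field ^ 2 ^ 2"
  assumes ch: "CHAR('a) = 2" and z: "z \<in> involutions SL2"
    and comm: "M ** z = z ** M" and comm': "M' ** z = z ** M'"
  shows "M ** M' = M' ** M"
proof -
  obtain b c where bc: "z $ 1 $ 2 = b" "z $ 2 $ 1 = c" "b \<noteq> 0 \<or> c \<noteq> 0"
    using SL2_involution_entries[OF ch z] by metis
  have M: "M $ 2 $ 2 = M $ 1 $ 1" "b * M $ 2 $ 1 = c * M $ 1 $ 2"
    using commute_SL2_involution_entries[OF ch z comm] bc by auto
  have M': "M' $ 2 $ 2 = M' $ 1 $ 1" "b * M' $ 2 $ 1 = c * M' $ 1 $ 2"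
    using commute_SL2_involution_entries[OF ch z comm'] bc by auto
  have "M $ 1 $ 2 * M' $ 2 $ 1 = M' $ 1 $ 2 * M $ 2 $ 1"
  proof (cases "b = 0")
    case True
    then have "M $ 1 $ 2 = 0" "M' $ 1 $ 2 = 0"
      using M(2) M'(2) bc(3) by simp_all
    then show ?thesis
      by simp
  next
    case False
    then have "M $ 2 $ 1 = c * M $ 1 $ 2 / b" "M' $ 2 $ 1 = c * M' $ 1 $ 2 / b"
      using M(2) M'(2) by (simp_all add: field_simps)
    then show ?thesis
      by simp
  qed
  then show ?thesis
    using M(1) M'(1) unfolding matrix_2_eq_iff by (simp add: matrix_mult_2_nth algebra_simps)
qed

lemma SL2_involution_centralizers_elementary_abelian:
  assumes "CHAR('a::field) = 2"
  shows "involution_centralizers_elementary_abelian (SL2 :: ('a ^ 2 ^ 2) monoid)"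
proof (intro involution_centralizers_elementary_abelian.intro
    involution_centralizers_elementary_abelian_axioms.intro group_SL2)
  fix z g h :: "'a ^ 2 ^ 2"
  assume z: "z \<in> involutions SL2"
  show "g \<otimes>\<^bsub>SL2\<^esub> h = h \<otimes>\<^bsub>SL2\<^esub> g" if "g \<in> centralizer_in SL2 z" "h \<in> centralizer_in SL2 z"
    unfolding mult_SL2
    by (rule SL2_centralizer_involution_commute[OF assms z])
      (use that in \<open>auto simp: centralizer_in_def\<close>)
  show "g \<otimes>\<^bsub>SL2\<^esub> g = \<one>\<^bsub>SL2\<^esub>" if "g \<in> centralizer_in SL2 z"
    unfolding mult_SL2 one_SL2
    by (rule SL2_centralizer_involution_square[OF assms z])
      (use that in \<open>auto simp: centralizer_in_def\<close>)
qed

definition upper_transvection :: "'a::field ^ 2 ^ 2" where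
  "upper_transvection = (\<chi> i j. if i = 2 \<and> j = 1 then 0 else 1)"

definition lower_transvection :: "'a::field ^ 2 ^ 2" where
  "lower_transvection = (\<chi> i j. if i = 1 \<and> j = 2 then 0 else 1)"

lemma transvections_involutive_SL2:
  assumes "CHAR('a::field) = 2"
  shows "(upper_transvection :: 'a ^ 2 ^ 2) \<in> carrier SL2"
    "upper_transvection \<otimes>\<^bsub>SL2\<^esub> upper_transvection = (\<one>\<^bsub>SL2\<^esub> :: 'a ^ 2 ^ 2)"
    "(lower_transvection :: 'a ^ 2 ^ 2) \<in> carrier SL2"
    "lower_transvection \<otimes>\<^bsub>SL2\<^esub> lower_transvection = (\<one>\<^bsub>SL2\<^esub> :: 'a ^ 2 ^ 2)"
  using add_self_CHAR_2[OF assms, of 1]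
  by (simp_all add: upper_transvection_def lower_transvection_def det_2 matrix_2_eq_iff
      matrix_mult_2_nth mat_1_2_nth)

lemma SL2_involution_commute_upper_conjugate:
  fixes z :: "'a::field ^ 2 ^ 2"
  defines "w \<equiv> upper_transvection ** z ** upper_transvection"
  assumes ch: "CHAR('a) = 2" and z: "z \<in> involutions SL2" and comm: "w ** z = z ** w"
  shows "z $ 2 $ 1 = 0"
proof -
  obtain a b c where zz: "z $ 1 $ 1 = a" "z $ 2 $ 2 = a" "z $ 1 $ 2 = b" "z $ 2 $ 1 = c"
    using SL2_involution_entries[OF ch z] by metis
  have "b * c = c * (a + c + b + a)"
    using commute_SL2_involution_entries[OF ch z comm]
    by (simp add: w_def matrix_mult_2_nth upper_transvection_def zz)
  then have "b * c = c * c + c * b + c * (a + a)"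
    by (simp add: algebra_simps)
  then have "c * c = 0"
    using add_self_CHAR_2[OF ch, of a] by (simp add: mult.commute)
  then show ?thesis
    using zz by simp
qed

lemma SL2_involution_commute_lower_conjugate:
  fixes z :: "'a::field ^ 2 ^ 2"
  defines "w \<equiv> lower_transvection ** z ** lower_transvection"
  assumes ch: "CHAR('a) = 2" and z: "z \<in> involutions SL2" and comm: "w ** z = z ** w"
  shows "z $ 1 $ 2 = 0"
proof -
  obtain a b c where zz: "z $ 1 $ 1 = a" "z $ 2 $ 2 = a" "z $ 1 $ 2 = b" "z $ 2 $ 1 = c"
    using SL2_involution_entries[OF ch z] by metis
  have "c * b = b * (a + b + c + a)"
    using commute_SL2_involution_entries[OF ch z comm]
    by (simp add: w_def matrix_mult_2_nth lower_transvection_def zz)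
  then have "c * b = b * b + b * c + b * (a + a)"
    by (simp add: algebra_simps)
  then have "b * b = 0"
    using add_self_CHAR_2[OF ch, of a] by (simp add: mult.commute)
  then show ?thesis
    using zz by simp
qed

lemma SL2_involution_noncommuting_conjugate:
  fixes z :: "'a::field ^ 2 ^ 2"
  assumes ch: "CHAR('a) = 2" and z: "z \<in> involutions SL2"
  shows "\<exists>w\<in>conj_class SL2 z. z ** w \<noteq> w ** z"
proof -
  interpret SL2: group "SL2 :: ('a ^ 2 ^ 2) monoid"
    by (rule group_SL2)
  have "z \<in> carrier SL2"
    using z by (simp add: involutions_SL2)
  then have "upper_transvection ** z ** upper_transvection \<in> conj_class SL2 z"
    "lower_transvection ** z ** lower_transvection \<in> conj_class SL2 z"
    using SL2.conj_by_involution_mem_conj_class transvections_involutive_SL2[OF ch] by simp_all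
  then show ?thesis
    using SL2_involution_entries[OF ch z] SL2_involution_commute_upper_conjugate[OF ch z]
      SL2_involution_commute_lower_conjugate[OF ch z]
    by metis
qed

theorem proposition3p3:
  fixes x :: "'a::{field, finite} ^ 2 ^ 2"
  assumes "CHAR('a) = 2"
    and "x \<in> carrier SL2" and "x \<noteq> \<one>\<^bsub>SL2\<^esub>" and "x \<otimes>\<^bsub>SL2\<^esub> x = \<one>\<^bsub>SL2\<^esub>"
  defines "C \<equiv> conj_class SL2 x"
  shows "(\<forall>a\<in>C. \<forall>b\<in>C. killing_adj SL2 C a b \<longleftrightarrow> commuting_adj SL2 a b)
         \<and> \<not> killing_irreducible SL2 C
         \<and> killing_nondegenerate SL2 C"
proof -
  interpret involution_centralizers_elementary_abelian "SL2 :: ('a ^ 2 ^ 2) monoid"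
    using assms(1) by (rule SL2_involution_centralizers_elementary_abelian)
  have x: "x \<in> involutions SL2"
    using assms(2-4) by (simp add: involutions_def)
  then have C: "C \<subseteq> involutions SL2"
    unfolding C_def by (rule conj_class_subset_involutions)
  have "x \<in> C"
    unfolding C_def using assms(2) by (rule mem_conj_class_self)
  moreover obtain w where "w \<in> C" "x \<otimes>\<^bsub>SL2\<^esub> w \<noteq> w \<otimes>\<^bsub>SL2\<^esub> x"
    using SL2_involution_noncommuting_conjugate[OF assms(1) x] by (auto simp: C_def)
  ultimately show ?thesis
    using killing_adj_iff_commuting_adj[OF C] not_killing_irreducible_if_noncommuting[OF C]
      killing_nondegenerate_if_noncommuting[OF C]
    by auto
qed

end
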